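(* Let $d\ge 2$ and $k_1,k_2\in\{2,\dots,d\}$. Let $C_1\subset\mathbb{S}^{d-1}$ be a $k_1$-tangent cap and $C_2\subset\mathbb{S}^{d-1}$ a $k_2$-tangent cap, and let $\mathcal O_1,\mathcal O_2$ be their orbits under the group generated by the reflections in the coordinate hyperplanes. Suppose $\mathcal O_1\ne\mathcal O_2$ and that the caps in $\mathcal O_1\cup\mathcal O_2$ form a packing (their interiors are pairwise disjoint). Then $$k_1+k_2-d\le\sqrt{(k_1-1)(k_2-1)}-1.$$
   Context: $\mathbb{S}^{d-1}$ is the unit sphere of $\mathbb{E}^d$ centred at the origin, with the standard orthonormal basis $\boldsymbol e_1,\dots,\boldsymbol e_d$. The coordinate greatspheres are $G_i=\{\boldsymbol x\in\mathbb{S}^{d-1}\mid x_i=0\}$. A spherical cap is a closed set $\{\boldsymbol x\in\mathbb{S}^{d-1}\mid \text{spherical distance from }\boldsymbol x\text{ to }\boldsymbol c\le r\}$ with centre $\boldsymbol c\in\mathbb{S}^{d-1}$ and spherical radius $r\in(0,\pi/2)$. A cap is tangent to $G_i$ if it meets $G_i$ only at boundary points of the cap (equivalently, its radius equals the angular distance from its centre to the hyperplane $x_i=0$). For $k\in\{2,\dots,d\}$, a $k$-tangent cap is a spherical cap whose centre lies on the intersection of $d-k$ of the coordinate greatspheres and which is tangent to each of the remaining $k$ coordinate greatspheres. *)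

theory Defs
  imports "HOL-Analysis.Analysis"
begin

text \<open>Points of the unit sphere S^{d-1} in E^d are vectors of type real^'n with d = CARD('n).\<close>

definition sph_dist :: "real^'n \<Rightarrow> real^'n \<Rightarrow> real" where
  "sph_dist x y = arccos (x \<bullet> y)"

definition coord_greatsphere :: "'n \<Rightarrow> (real^'n) set" where
  "coord_greatsphere i = {x \<in> sphere 0 1. x $ i = 0}"

definition sph_cap :: "real^'n \<Rightarrow> real \<Rightarrow> (real^'n) set" where
  "sph_cap c r = {x \<in> sphere 0 1. sph_dist x c \<le> r}"

definition dist_to_greatsphere :: "real^'n \<Rightarrow> 'n \<Rightarrow> real" where
  "dist_to_greatsphere c i = Inf ((\<lambda>x. sph_dist x c) ` coord_greatsphere i)"

definition tangent_cap_to :: "real^'n \<Rightarrow> real \<Rightarrow> 'n \<Rightarrow> bool" where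
  "tangent_cap_to c r i \<longleftrightarrow> r = dist_to_greatsphere c i"

definition k_tangent_cap :: "nat \<Rightarrow> (real^'n) set \<Rightarrow> bool" where
  "k_tangent_cap k C \<longleftrightarrow>
     (\<exists>c r S. c \<in> sphere 0 1 \<and> 0 < r \<and> r < pi / 2 \<and> C = sph_cap c r \<and>
        card S = CARD('n) - k \<and> (\<forall>i\<in>S. c $ i = 0) \<and>
        (\<forall>i. i \<notin> S \<longrightarrow> tangent_cap_to c r i))"

definition coord_refl :: "'n \<Rightarrow> real^'n \<Rightarrow> real^'n" where
  "coord_refl i x = (\<chi> j. if j = i then - (x $ j) else x $ j)"

text \<open>The group generated by the coordinate reflections (closure of id under composition
  with generators; each generator is an involution, so this is the generated group).\<close>
inductive_set refl_group :: "(real^'n \<Rightarrow> real^'n) set" where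
  refl_group_id: "id \<in> refl_group"
| refl_group_step: "g \<in> refl_group \<Longrightarrow> coord_refl i \<circ> g \<in> refl_group"

definition cap_orbit :: "(real^'n) set \<Rightarrow> (real^'n) set set" where
  "cap_orbit C = {g ` C | g. g \<in> refl_group}"

definition sph_interior :: "(real^'n) set \<Rightarrow> (real^'n) set" where
  "sph_interior A = {x \<in> A. \<exists>e>0. ball x e \<inter> sphere 0 1 \<subseteq> A}"

definition is_packing :: "(real^'n) set set \<Rightarrow> bool" where
  "is_packing F \<longleftrightarrow> (\<forall>A\<in>F. \<forall>B\<in>F. A \<noteq> B \<longrightarrow> sph_interior A \<inter> sph_interior B = {})"

end

theory Submission
  imports Defs
begin

text \<open>A \<open>k\<close>-tangent cap of radius \<open>r\<close> has a centre with \<open>|c\<^sub>i| = sin r\<close> on \<open>k\<close> coordinates and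
  \<open>c\<^sub>i = 0\<close> elsewhere, so \<open>k sin\<^sup>2 r = 1\<close>. Reflect \<open>C\<^sub>1\<close> so that the signs of its centre agree
  with those of the centre of \<open>C\<^sub>2\<close>; the two centres then have inner product \<open>m sin r\<^sub>1 sin r\<^sub>2\<close>,
  where \<open>m \<ge> k\<^sub>1 + k\<^sub>2 - d\<close> is the number of common support coordinates. The reflected cap
  lies in the orbit of \<open>C\<^sub>1\<close> and differs from \<open>C\<^sub>2\<close>, so the interiors are disjoint and the centres are at
  angle at least \<open>r\<^sub>1 + r\<^sub>2\<close>: \<open>m sin r\<^sub>1 sin r\<^sub>2 \<le> cos (r\<^sub>1 + r\<^sub>2)\<close>. Squaring
  \<open>(m + 1) sin r\<^sub>1 sin r\<^sub>2 \<le> cos r\<^sub>1 cos r\<^sub>2\<close> and substituting \<open>sin\<^sup>2 r\<^sub>j = 1/k\<^sub>j\<close> gives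
  \<open>(m + 1)\<^sup>2 \<le> (k\<^sub>1 - 1)(k\<^sub>2 - 1)\<close>.\<close>

lemma coord_refl_involution: "coord_refl i \<circ> coord_refl i = id"
  by (auto simp: coord_refl_def fun_eq_iff vec_eq_iff)

lemma refl_group_comp: "g \<in> refl_group \<Longrightarrow> h \<in> refl_group \<Longrightarrow> g \<circ> h \<in> refl_group"
proof (induction g rule: refl_group.induct)
  case refl_group_id
  then show ?case by simp
next
  case (refl_group_step g i)
  then show ?case by (metis comp_assoc refl_group.refl_group_step)
qed

lemma refl_group_left_inverse:
  assumes "g \<in> refl_group"
  obtains h where "h \<in> refl_group" "h \<circ> g = id"
  using assms
proof (induction g arbitrary: thesis rule: refl_group.induct)
  case refl_group_id
  then show ?case using refl_group.refl_group_id by fastforce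
next
  case (refl_group_step g i)
  then obtain h where h: "h \<in> refl_group" "h \<circ> g = id" by blast
  have "coord_refl i \<in> refl_group"
    using refl_group.refl_group_step[OF refl_group.refl_group_id] by simp
  then have "h \<circ> coord_refl i \<in> refl_group" by (rule refl_group_comp[OF h(1)])
  moreover have "(h \<circ> coord_refl i) \<circ> (coord_refl i \<circ> g) = id"
    using h(2) by (metis comp_assoc coord_refl_involution id_comp)
  ultimately show ?case using refl_group_step.prems by blast
qed

lemma self_in_cap_orbit: "C \<in> cap_orbit C"
  unfolding cap_orbit_def by (auto intro!: exI[of _ id] refl_group.refl_group_id)

lemma cap_orbit_image:
  assumes g: "g \<in> refl_group"
  shows "cap_orbit (g ` C) = cap_orbit C"
proof
  show "cap_orbit (g ` C) \<subseteq> cap_orbit C"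
  proof
    fix X assume "X \<in> cap_orbit (g ` C)"
    then obtain f where f: "f \<in> refl_group" "X = f ` g ` C" by (auto simp: cap_orbit_def)
    then have "X = (f \<circ> g) ` C" by (simp add: image_comp)
    then show "X \<in> cap_orbit C" using refl_group_comp[OF f(1) g] unfolding cap_orbit_def by blast
  qed
next
  obtain h where h: "h \<in> refl_group" "h \<circ> g = id" using refl_group_left_inverse[OF g] .
  show "cap_orbit C \<subseteq> cap_orbit (g ` C)"
  proof
    fix X assume "X \<in> cap_orbit C"
    then obtain f where f: "f \<in> refl_group" "X = f ` C" by (auto simp: cap_orbit_def)
    then have "X = (f \<circ> h) ` (g ` C)" by (metis h(2) comp_id image_comp)
    then show "X \<in> cap_orbit (g ` C)"
      using refl_group_comp[OF f(1) h(1)] unfolding cap_orbit_def by blast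
  qed
qed

lemma packing_interiors_disjoint:
  assumes "is_packing (cap_orbit C1 \<union> cap_orbit C2)" "cap_orbit C1 \<noteq> cap_orbit C2"
    and "g \<in> refl_group"
  shows "sph_interior (g ` C1) \<inter> sph_interior C2 = {}"
proof -
  have "g ` C1 \<in> cap_orbit C1" using assms(3) by (auto simp: cap_orbit_def)
  moreover have "g ` C1 \<noteq> C2" using assms(2) cap_orbit_image[OF assms(3)] by metis
  ultimately show ?thesis using assms(1) self_in_cap_orbit unfolding is_packing_def by blast
qed

definition coord_flip :: "'n set \<Rightarrow> real^'n \<Rightarrow> real^'n" where
  "coord_flip T x = (\<chi> j. if j \<in> T then - (x $ j) else x $ j)"

lemma coord_flip_in_refl_group:
  fixes T :: "'n::finite set"
  shows "coord_flip T \<in> refl_group"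
proof -
  have "finite T" by simp
  then show ?thesis
  proof (induction T rule: finite_induct)
    case empty
    have "coord_flip {} = (id :: real^'n \<Rightarrow> _)" by (auto simp: coord_flip_def fun_eq_iff vec_eq_iff)
    then show ?case by (metis refl_group.refl_group_id)
  next
    case (insert i T)
    then have "coord_flip (insert i T) = coord_refl i \<circ> (coord_flip T :: real^'n \<Rightarrow> _)"
      by (auto simp: coord_flip_def coord_refl_def fun_eq_iff vec_eq_iff)
    then show ?case by (metis insert.IH refl_group.refl_group_step)
  qed
qed

lemma coord_flip_coord_flip [simp]: "coord_flip T (coord_flip T x) = x"
  by (auto simp: coord_flip_def vec_eq_iff)

lemma inner_coord_flip [simp]: "coord_flip T x \<bullet> coord_flip T y = x \<bullet> y"
  by (auto simp: coord_flip_def inner_vec_def intro!: sum.cong)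

lemma norm_coord_flip [simp]: "norm (coord_flip T x) = norm x"
  by (simp add: norm_eq_sqrt_inner)

lemma coord_flip_sph_cap: "coord_flip T ` sph_cap c r = sph_cap (coord_flip T c) r"
proof -
  have "y \<in> sph_cap (coord_flip T c) r \<longleftrightarrow> coord_flip T y \<in> sph_cap c r" for y
    using inner_coord_flip[of T "coord_flip T y" c]
    by (simp add: sph_cap_def sph_dist_def inner_commute)
  then show ?thesis by (auto simp: image_iff) (metis coord_flip_coord_flip)
qed

lemma inner_coord_flip_sign_mismatch:
  "coord_flip {i. x $ i * y $ i < 0} x \<bullet> y = (\<Sum>i\<in>UNIV. \<bar>x $ i\<bar> * \<bar>y $ i\<bar>)"
  unfolding inner_vec_def
  by (intro sum.cong) (auto simp: coord_flip_def abs_mult[symmetric] abs_of_neg)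

lemma exists_other_index:
  fixes i :: "'n::finite"
  assumes "CARD('n) \<ge> 2"
  obtains j :: 'n where "j \<noteq> i"
proof -
  have "(UNIV :: 'n set) \<noteq> {i}"
  proof
    assume "UNIV = {i}"
    then have "CARD('n) = card {i}" by (rule arg_cong)
    with assms show False by simp
  qed
  then show ?thesis using that by blast
qed

lemma norm_drop_coord:
  fixes c :: "real^'n"
  assumes "norm c = 1"
  shows "norm (c - (c $ i) *\<^sub>R axis i 1) = sqrt (1 - (c $ i)\<^sup>2)"
proof -
  have "c \<bullet> c = 1" using assms by (simp add: norm_eq_1)
  then show ?thesis
    by (simp add: norm_eq_sqrt_inner inner_diff_left inner_diff_right inner_axis inner_axis'
        power2_eq_square)
qed

lemma inner_drop_coord: "x $ i = 0 \<Longrightarrow> x \<bullet> (c - (c $ i) *\<^sub>R axis i 1) = x \<bullet> c"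
  by (simp add: inner_diff_right inner_axis)

lemma inner_le_on_coord_greatsphere:
  fixes c :: "real^'n"
  assumes "norm c = 1" "x \<in> coord_greatsphere i"
  shows "x \<bullet> c \<le> sqrt (1 - (c $ i)\<^sup>2)"
  using assms norm_cauchy_schwarz[of x "c - (c $ i) *\<^sub>R axis i 1"]
  by (simp add: coord_greatsphere_def inner_drop_coord norm_drop_coord)

lemma inner_attains_on_coord_greatsphere:
  fixes c :: "real^'n"
  assumes "CARD('n) \<ge> 2" "norm c = 1"
  obtains x where "x \<in> coord_greatsphere i" "x \<bullet> c = sqrt (1 - (c $ i)\<^sup>2)"
proof (cases "c - (c $ i) *\<^sub>R axis i 1 = 0")
  case True
  obtain j where "j \<noteq> i" using exists_other_index[OF assms(1)] .
  then have axis_i: "(axis j 1 :: real^'n) $ i = 0" by (simp add: axis_def)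
  then have "axis j 1 \<in> coord_greatsphere i" by (simp add: coord_greatsphere_def)
  moreover have "axis j 1 \<bullet> c = sqrt (1 - (c $ i)\<^sup>2)"
    using True inner_drop_coord[OF axis_i, of c] norm_drop_coord[OF assms(2), of i] by simp
  ultimately show ?thesis using that by blast
next
  case False
  define c' where "c' = c - (c $ i) *\<^sub>R axis i 1"
  define x where "x = (1 / norm c') *\<^sub>R c'"
  have "x \<in> coord_greatsphere i"
    using False by (simp add: coord_greatsphere_def x_def c'_def)
  moreover have "x \<bullet> c = norm c'"
  proof -
    have "c' $ i = 0" by (simp add: c'_def)
    then have "c' \<bullet> c = (norm c')\<^sup>2"
      using inner_drop_coord[of c' i c] by (simp add: c'_def[symmetric] power2_norm_eq_inner)
    moreover have "c' \<noteq> 0" using False by (simp add: c'_def)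
    ultimately show ?thesis by (simp add: x_def power2_eq_square)
  qed
  ultimately show ?thesis using that norm_drop_coord[OF assms(2)] c'_def by metis
qed

lemma dist_to_greatsphere_eq:
  fixes c :: "real^'n"
  assumes "CARD('n) \<ge> 2" "norm c = 1"
  shows "dist_to_greatsphere c i = arccos (sqrt (1 - (c $ i)\<^sup>2))"
  unfolding dist_to_greatsphere_def sph_dist_def
proof (rule cInf_eq_minimum)
  obtain x where "x \<in> coord_greatsphere i" "x \<bullet> c = sqrt (1 - (c $ i)\<^sup>2)"
    using inner_attains_on_coord_greatsphere[OF assms] .
  then show "arccos (sqrt (1 - (c $ i)\<^sup>2)) \<in> (\<lambda>x. arccos (x \<bullet> c)) ` coord_greatsphere i"
    by (metis image_eqI)
next
  fix y assume "y \<in> (\<lambda>x. arccos (x \<bullet> c)) ` coord_greatsphere i"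
  then obtain x where x: "x \<in> coord_greatsphere i" "y = arccos (x \<bullet> c)" by blast
  have "\<bar>x \<bullet> c\<bar> \<le> 1"
    using x(1) assms(2) Cauchy_Schwarz_ineq2[of x c] by (simp add: coord_greatsphere_def)
  moreover have "\<bar>c $ i\<bar> \<le> 1" using component_le_norm_cart[of c i] assms(2) by simp
  ultimately show "arccos (sqrt (1 - (c $ i)\<^sup>2)) \<le> y"
    using x inner_le_on_coord_greatsphere[OF assms(2) x(1)]
    by (auto intro!: arccos_le_arccos simp: abs_square_le_1)
qed

lemma tangent_cap_to_iff:
  fixes c :: "real^'n"
  assumes "CARD('n) \<ge> 2" "norm c = 1" "0 < r" "r < pi / 2"
  shows "tangent_cap_to c r i \<longleftrightarrow> \<bar>c $ i\<bar> = sin r"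
proof -
  have ci: "(c $ i)\<^sup>2 \<le> 1"
    using component_le_norm_cart[of c i] assms(2) by (simp add: abs_square_le_1)
  have sin_pos: "0 < sin r" and cos_pos: "0 < cos r"
    using assms(3,4) by (auto intro!: sin_gt_zero cos_gt_zero)
  have "0 \<le> r" "r \<le> pi" using assms(3,4) by auto
  moreover have "0 \<le> sqrt (1 - (c $ i)\<^sup>2)" "sqrt (1 - (c $ i)\<^sup>2) \<le> 1" using ci by auto
  ultimately have "r = arccos (sqrt (1 - (c $ i)\<^sup>2)) \<longleftrightarrow> cos r = sqrt (1 - (c $ i)\<^sup>2)"
    by (metis arccos_cos cos_arccos neg_le_0_iff_le zero_le_one order_trans)
  also have "\<dots> \<longleftrightarrow> (cos r)\<^sup>2 = 1 - (c $ i)\<^sup>2"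
    using cos_pos ci by (auto simp: real_sqrt_unique)
  also have "\<dots> \<longleftrightarrow> (c $ i)\<^sup>2 = (sin r)\<^sup>2"
    using sin_cos_squared_add[of r] by linarith
  also have "\<dots> \<longleftrightarrow> \<bar>c $ i\<bar> = sin r"
    using sin_pos by (metis abs_of_pos power2_abs power2_eq_iff_nonneg abs_ge_zero less_imp_le)
  finally show ?thesis
    using assms(1,2) by (simp add: tangent_cap_to_def dist_to_greatsphere_eq)
qed

lemma card_support_mul_square_eq_1:
  fixes c :: "real^'n"
  assumes "norm c = 1" "\<And>i. \<bar>c $ i\<bar> = (if i \<in> A then s else 0)"
  shows "real (card A) * s\<^sup>2 = 1"
proof -
  have "1 = (\<Sum>i\<in>UNIV. \<bar>c $ i\<bar>\<^sup>2)"
    using assms(1) by (simp add: norm_eq_1 inner_vec_def power2_eq_square)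
  also have "\<dots> = (\<Sum>i\<in>UNIV. if i \<in> A then s\<^sup>2 else 0)"
    by (intro sum.cong) (auto simp: assms(2))
  also have "\<dots> = real (card A) * s\<^sup>2" by (simp add: sum.If_cases)
  finally show ?thesis by simp
qed

lemma k_tangent_cap_centre:
  fixes C :: "(real^'n) set"
  assumes "k_tangent_cap k C" "CARD('n) \<ge> 2" "k \<le> CARD('n)"
  obtains c r A where "C = sph_cap c r" "norm c = 1" "0 < r" "r < pi / 2" "card A = k"
    "\<And>i. \<bar>c $ i\<bar> = (if i \<in> A then sin r else 0)" "real k * (sin r)\<^sup>2 = 1"
proof -
  obtain c r S where c: "c \<in> sphere 0 1" "0 < r" "r < pi / 2" "C = sph_cap c r"
    "card S = CARD('n) - k" "\<forall>i\<in>S. c $ i = 0" "\<forall>i. i \<notin> S \<longrightarrow> tangent_cap_to c r i"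
    using assms(1) unfolding k_tangent_cap_def by blast
  have norm_c: "norm c = 1" using c(1) by simp
  have card_A: "card (- S) = k"
    using c(5) assms(3) by (simp add: Compl_eq_Diff_UNIV card_Diff_subset)
  have coords: "\<bar>c $ i\<bar> = (if i \<in> - S then sin r else 0)" for i
    using c(6,7) tangent_cap_to_iff[OF assms(2) norm_c c(2,3)] by auto
  show ?thesis
    using that[OF c(4) norm_c c(2,3) card_A coords]
      card_support_mul_square_eq_1[OF norm_c coords] card_A
    by simp
qed

lemma mem_sph_interior_sph_cap:
  fixes a x :: "real^'n"
  assumes "norm a = 1" "norm x = 1" "x \<bullet> a > cos r" "0 \<le> r" "r \<le> pi"
  shows "x \<in> sph_interior (sph_cap a r)"
proof -
  have mem: "y \<in> sph_cap a r" if "norm y = 1" "y \<bullet> a > cos r" for y :: "real^'n"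
  proof -
    have "y \<bullet> a \<le> 1" using norm_cauchy_schwarz[of y a] that assms(1) by simp
    then have "arccos (y \<bullet> a) \<le> arccos (cos r)"
      using that(2) by (intro arccos_le_arccos) auto
    then show ?thesis using that assms(4,5) by (simp add: sph_cap_def sph_dist_def arccos_cos)
  qed
  define e where "e = x \<bullet> a - cos r"
  have "ball x e \<inter> sphere 0 1 \<subseteq> sph_cap a r"
  proof
    fix y assume y: "y \<in> ball x e \<inter> sphere 0 1"
    have "\<bar>(x - y) \<bullet> a\<bar> \<le> norm (x - y)"
      using Cauchy_Schwarz_ineq2[of "x - y" a] assms(1) by simp
    moreover have "norm (x - y) < e" using y by (simp add: dist_norm)
    ultimately have "y \<bullet> a > cos r" by (simp add: e_def inner_diff_left)
    then show "y \<in> sph_cap a r" using mem y by simp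
  qed
  moreover have "e > 0" using assms(3) by (simp add: e_def)
  ultimately show ?thesis using mem[OF assms(2,3)] unfolding sph_interior_def by blast
qed

lemma great_circle_point:
  fixes a b :: "'a::real_inner"
  assumes "norm a = 1" "norm b = 1" "a \<bullet> b = cos \<theta>" "0 \<le> \<phi>" "\<phi> \<le> \<theta>" "\<theta> < pi"
  obtains x where "norm x = 1" "x \<bullet> a = cos \<phi>" "x \<bullet> b = cos (\<theta> - \<phi>)"
proof (cases "\<theta> = 0")
  case True
  then show ?thesis
    using that[of a] assms by (simp add: inner_commute norm_eq_1)
next
  case False
  have aa: "a \<bullet> a = 1" and bb: "b \<bullet> b = 1" using assms(1,2) by (simp_all add: norm_eq_1)
  have ba: "b \<bullet> a = cos \<theta>" using assms(3) by (simp add: inner_commute)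
  define s where "s = sin \<theta>"
  have "s > 0" using False assms(4-6) by (simp add: s_def sin_gt_zero)
  have s_sq: "1 - cos \<theta> * cos \<theta> = s * s"
    using sin_cos_squared_add[of \<theta>] by (simp add: s_def power2_eq_square)
  define x where "x = cos \<phi> *\<^sub>R a + (sin \<phi> / s) *\<^sub>R (b - cos \<theta> *\<^sub>R a)"
  have "x \<bullet> a = cos \<phi>"
    by (simp add: x_def inner_add_left inner_diff_left aa ba)
  moreover have "x \<bullet> b = cos (\<theta> - \<phi>)"
  proof -
    have "x \<bullet> b = cos \<phi> * cos \<theta> + (sin \<phi> / s) * (1 - cos \<theta> * cos \<theta>)"
      by (simp add: x_def inner_add_left inner_diff_left bb assms(3))
    also have "\<dots> = cos \<phi> * cos \<theta> + sin \<phi> * sin \<theta>"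
      using \<open>s > 0\<close> by (simp add: s_sq s_def)
    finally show ?thesis by (simp add: cos_diff mult.commute)
  qed
  moreover have "norm x = 1"
  proof -
    have "x \<bullet> x = (cos \<phi>)\<^sup>2 + (sin \<phi> / s)\<^sup>2 * (1 - cos \<theta> * cos \<theta>)"
      by (simp add: x_def inner_add_left inner_add_right inner_diff_left inner_diff_right
          aa bb ba assms(3) algebra_simps power2_eq_square)
         (simp add: add_divide_distrib[symmetric])
    also have "\<dots> = (cos \<phi>)\<^sup>2 + (sin \<phi>)\<^sup>2"
      using \<open>s > 0\<close> by (simp only: s_sq) (simp add: power_divide power2_eq_square)
    finally show ?thesis by (simp add: norm_eq_1)
  qed
  ultimately show ?thesis using that by blast
qed

lemma inner_le_cos_add_if_sph_interiors_disjoint: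
  fixes a b :: "real^'n"
  assumes "norm a = 1" "norm b = 1" "0 < r1" "0 < r2" "r1 + r2 \<le> pi"
    and "sph_interior (sph_cap a r1) \<inter> sph_interior (sph_cap b r2) = {}"
  shows "a \<bullet> b \<le> cos (r1 + r2)"
proof (rule ccontr)
  assume overlap: "\<not> ?thesis"
  define \<theta> where "\<theta> = arccos (a \<bullet> b)"
  have ab: "\<bar>a \<bullet> b\<bar> \<le> 1" using Cauchy_Schwarz_ineq2[of a b] assms(1,2) by simp
  then have "0 \<le> \<theta>" "cos \<theta> = a \<bullet> b" by (auto simp: \<theta>_def arccos_lbound)
  have "\<theta> < arccos (cos (r1 + r2))"
    using overlap ab unfolding \<theta>_def by (intro arccos_less_arccos) auto
  then have "\<theta> < r1 + r2" using assms(3-5) by (simp add: arccos_cos)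
  \<comment> \<open>a point splitting the arc in the ratio \<open>r1 : r2\<close> lies strictly inside both caps\<close>
  define \<phi> where "\<phi> = \<theta> * r1 / (r1 + r2)"
  have "\<theta> - \<phi> = \<theta> * r2 / (r1 + r2)" using assms(3,4) by (simp add: \<phi>_def field_simps)
  moreover have "\<theta> * r1 < (r1 + r2) * r1" "\<theta> * r2 < (r1 + r2) * r2"
    using \<open>\<theta> < r1 + r2\<close> assms(3,4) by simp_all
  ultimately have \<phi>: "0 \<le> \<phi>" "\<phi> < r1" "0 \<le> \<theta> - \<phi>" "\<theta> - \<phi> < r2"
    using \<open>0 \<le> \<theta>\<close> assms(3,4) by (auto simp: \<phi>_def field_simps)
  obtain x where x: "norm x = 1" "x \<bullet> a = cos \<phi>" "x \<bullet> b = cos (\<theta> - \<phi>)"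
    using great_circle_point[OF assms(1,2) \<open>cos \<theta> = a \<bullet> b\<close>[symmetric] \<phi>(1)] \<phi>(3)
      \<open>\<theta> < r1 + r2\<close> assms(5) by force
  have "x \<in> sph_interior (sph_cap a r1)"
    using x \<phi> assms by (intro mem_sph_interior_sph_cap) (auto intro!: cos_monotone_0_pi)
  moreover have "x \<in> sph_interior (sph_cap b r2)"
    using x \<phi> assms by (intro mem_sph_interior_sph_cap) (auto intro!: cos_monotone_0_pi)
  ultimately show False using assms(6) by blast
qed

lemma inner_coord_flip_aligned_centres:
  fixes c1 c2 :: "real^'n"
  assumes "\<And>i. \<bar>c1 $ i\<bar> = (if i \<in> A1 then s1 else 0)"
    and "\<And>i. \<bar>c2 $ i\<bar> = (if i \<in> A2 then s2 else 0)"
  shows "coord_flip {i. c1 $ i * c2 $ i < 0} c1 \<bullet> c2 = real (card (A1 \<inter> A2)) * (s1 * s2)"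
proof -
  have "(\<Sum>i\<in>UNIV. \<bar>c1 $ i\<bar> * \<bar>c2 $ i\<bar>) = (\<Sum>i\<in>UNIV. if i \<in> A1 \<inter> A2 then s1 * s2 else 0)"
    by (intro sum.cong) (auto simp: assms)
  then show ?thesis by (simp add: inner_coord_flip_sign_mismatch sum.If_cases Int_def)
qed

lemma tangent_radii_overlap_bound:
  fixes k1 k2 :: real and m :: nat
  assumes "k1 * (sin r1)\<^sup>2 = 1" "k2 * (sin r2)\<^sup>2 = 1"
    and "0 < r1" "r1 < pi / 2" "0 < r2" "r2 < pi / 2"
    and "real m * (sin r1 * sin r2) \<le> cos (r1 + r2)"
  shows "real m + 1 \<le> sqrt ((k1 - 1) * (k2 - 1))"
proof (rule real_le_rsqrt)
  have "0 < sin r1" "0 < sin r2" using assms(3-6) by (auto intro!: sin_gt_zero)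
  moreover have "(m + 1) * (sin r1 * sin r2) \<le> cos r1 * cos r2"
    using assms(7) by (simp add: cos_add algebra_simps)
  ultimately have "((m + 1) * (sin r1 * sin r2))\<^sup>2 \<le> (cos r1 * cos r2)\<^sup>2"
    by (intro power_mono) auto
  then have "k1 * k2 * ((m + 1) * (sin r1 * sin r2))\<^sup>2 \<le> k1 * k2 * (cos r1 * cos r2)\<^sup>2"
    using assms(1,2) zero_less_mult_iff[of k1 "(sin r1)\<^sup>2"] zero_less_mult_iff[of k2 "(sin r2)\<^sup>2"]
    by (intro mult_left_mono) auto
  moreover have "k1 * k2 * ((m + 1) * (sin r1 * sin r2))\<^sup>2
      = (m + 1)\<^sup>2 * (k1 * (sin r1)\<^sup>2) * (k2 * (sin r2)\<^sup>2)"
    by (simp add: power_mult_distrib)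
  moreover have "k1 * k2 * (cos r1 * cos r2)\<^sup>2
      = (k1 - k1 * (sin r1)\<^sup>2) * (k2 - k2 * (sin r2)\<^sup>2)"
    by (simp add: power_mult_distrib cos_squared_eq algebra_simps)
  ultimately show "(real m + 1)\<^sup>2 \<le> (k1 - 1) * (k2 - 1)" using assms(1,2) by (simp add: add.commute)
qed

theorem lemma5:
  fixes C1 C2 :: "(real^'n) set" and k1 k2 :: nat
  assumes "CARD('n) \<ge> 2"
    and "2 \<le> k1" "k1 \<le> CARD('n)" "2 \<le> k2" "k2 \<le> CARD('n)"
    and "k_tangent_cap k1 C1" "k_tangent_cap k2 C2"
    and "cap_orbit C1 \<noteq> cap_orbit C2"
    and "is_packing (cap_orbit C1 \<union> cap_orbit C2)"
  shows "real k1 + real k2 - real CARD('n) \<le> sqrt ((real k1 - 1) * (real k2 - 1)) - 1"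
proof -
  obtain c1 r1 A1 where C1: "C1 = sph_cap c1 r1" "norm c1 = 1" "0 < r1" "r1 < pi / 2"
    "card A1 = k1" "\<And>i. \<bar>c1 $ i\<bar> = (if i \<in> A1 then sin r1 else 0)" "real k1 * (sin r1)\<^sup>2 = 1"
    using k_tangent_cap_centre[OF assms(6,1,3)] by blast
  obtain c2 r2 A2 where C2: "C2 = sph_cap c2 r2" "norm c2 = 1" "0 < r2" "r2 < pi / 2"
    "card A2 = k2" "\<And>i. \<bar>c2 $ i\<bar> = (if i \<in> A2 then sin r2 else 0)" "real k2 * (sin r2)\<^sup>2 = 1"
    using k_tangent_cap_centre[OF assms(7,1,5)] by blast
  define T where "T = {i. c1 $ i * c2 $ i < 0}"
  have "sph_interior (sph_cap (coord_flip T c1) r1) \<inter> sph_interior (sph_cap c2 r2) = {}"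
    using packing_interiors_disjoint[OF assms(9,8) coord_flip_in_refl_group, of T]
    by (simp add: C1(1) C2(1) coord_flip_sph_cap)
  then have "coord_flip T c1 \<bullet> c2 \<le> cos (r1 + r2)"
    using C1(2-4) C2(2-4) by (intro inner_le_cos_add_if_sph_interiors_disjoint) auto
  then have "real (card (A1 \<inter> A2)) + 1 \<le> sqrt ((real k1 - 1) * (real k2 - 1))"
    using C1(3,4,7) C2(3,4,7) inner_coord_flip_aligned_centres[OF C1(6) C2(6)]
    by (intro tangent_radii_overlap_bound) (auto simp: T_def)
  moreover have "k1 + k2 \<le> CARD('n) + card (A1 \<inter> A2)"
    using card_Un_Int[of A1 A2] card_mono[of UNIV "A1 \<union> A2"] C1(5) C2(5) by simp
  ultimately show ?thesis by linarith
qed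

end
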